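(* Let $I \subset K[x,y]$ be a monomial ideal with $G(I)=\{u_0,\ldots,u_m\}$, $u_i=x^{a_i}y^{b_i}$, ordered so that $a_0>a_1>\cdots>a_m$ and $b_0<b_1<\cdots<b_m$, and let $d_i=\deg(u_i)=a_i+b_i$. Then $I$ is componentwise polymatroidal if and only if all of the following hold: (i) for each $0\le i<m$ with $d_i>d_{i+1}$: $a_i-1>a_{i+1}$ and $b_{i+1}=b_i+1$; (ii) for each $0\le i<m$ with $d_i<d_{i+1}$: $b_i+1<b_{i+1}$ and $a_{i+1}=a_i-1$; (iii) for each $0\le i<m$ with $d_i=d_{i+1}$: $b_{i+1}=b_i+1$ and $a_{i+1}=a_i-1$; (iv) there exists $0\le j\le m$ with $d_0\ge d_1\ge\cdots\ge d_j\le d_{j+1}\le\cdots\le d_m$.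
   Context: $G(I)$ is the minimal monomial generating set; $\deg_{x}(u)$ is the exponent of $x$ in $u$. A monomial ideal generated in a single degree is polymatroidal if for all $u,v\in G(I)$ and all variables $z$ with $\deg_{z}(u)>\deg_{z}(v)$ there exists a variable $w$ with $\deg_{w}(u)<\deg_{w}(v)$ and $w(u/z)\in I$. $I_{\langle j\rangle}$ denotes the ideal generated by all monomials of degree $j$ in $I$; $I$ is componentwise polymatroidal if every nonzero $I_{\langle j\rangle}$ is polymatroidal. *)

theory Defs
  imports Main
begin

text \<open>Monomials of K[x,y] are represented by their exponent vectors (a,b) :: nat \<times> nat,
  standing for x^a y^b. A monomial ideal I of K[x,y] is determined by the set of
  monomials it contains, which is an upward closed subset of nat \<times> nat (and every
  such set arises this way). The field K plays no role.\<close>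

type_synonym monom = "nat \<times> nat"

datatype var = X | Y

definition deg_var :: "var \<Rightarrow> monom \<Rightarrow> nat" where
  "deg_var z u = (case z of X \<Rightarrow> fst u | Y \<Rightarrow> snd u)"

definition deg :: "monom \<Rightarrow> nat" where
  "deg u = fst u + snd u"

definition mult_var :: "var \<Rightarrow> monom \<Rightarrow> monom" where
  "mult_var z u = (case z of X \<Rightarrow> (fst u + 1, snd u) | Y \<Rightarrow> (fst u, snd u + 1))"

definition div_var :: "var \<Rightarrow> monom \<Rightarrow> monom" where
  "div_var z u = (case z of X \<Rightarrow> (fst u - 1, snd u) | Y \<Rightarrow> (fst u, snd u - 1))"

definition mdvd :: "monom \<Rightarrow> monom \<Rightarrow> bool" where
  "mdvd u v \<longleftrightarrow> fst u \<le> fst v \<and> snd u \<le> snd v"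

definition monomial_ideal :: "monom set \<Rightarrow> bool" where
  "monomial_ideal I \<longleftrightarrow> (\<forall>u\<in>I. \<forall>v. mdvd u v \<longrightarrow> v \<in> I)"

definition gens :: "monom set \<Rightarrow> monom set" where
  "gens I = {u \<in> I. \<forall>v\<in>I. mdvd v u \<longrightarrow> v = u}"

text \<open>I_<j>: ideal generated by all monomials of degree j in I\<close>
definition deg_comp :: "monom set \<Rightarrow> nat \<Rightarrow> monom set" where
  "deg_comp I j = {w. \<exists>u\<in>I. deg u = j \<and> mdvd u w}"

definition polymatroidal :: "monom set \<Rightarrow> bool" where
  "polymatroidal I \<longleftrightarrow>
     (\<exists>d. \<forall>u\<in>gens I. deg u = d) \<and>
     (\<forall>u\<in>gens I. \<forall>v\<in>gens I. \<forall>z. deg_var z u > deg_var z v \<longrightarrow>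
        (\<exists>w. deg_var w u < deg_var w v \<and> mult_var w (div_var z u) \<in> I))"

definition componentwise_polymatroidal :: "monom set \<Rightarrow> bool" where
  "componentwise_polymatroidal I \<longleftrightarrow>
     (\<forall>j. deg_comp I j \<noteq> {} \<longrightarrow> polymatroidal (deg_comp I j))"

end

theory Submission
  imports Defs
begin

text \<open>In two variables the exchange condition in a fixed degree j says exactly that the
  exponents t with x^t y^(j-t) \<in> I form an interval. For a staircase of generators this
  interval property forces unit steps between neighbouring generators (a step of the x-exponent
  where the degree does not drop, of the y-exponent where it does not rise), and it forbids an
  ascent of the degree sequence followed later by a descent: the degree just below the top of
  the ascent would miss the corner under the top generator. Conversely, if the degrees form a
  valley, the generator just after the point where the staircase crosses a column has degree
  at most j, and the unit step there places it below the required monomial.\<close>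

lemma lift_Suc_mono_le_on:
  fixes f :: "nat \<Rightarrow> 'a::order"
  assumes "\<And>i. l \<le> i \<Longrightarrow> i < r \<Longrightarrow> f i \<le> f (Suc i)" "l \<le> x" "x \<le> y" "y \<le> r"
  shows "f x \<le> f y"
  using \<open>x \<le> y\<close> \<open>y \<le> r\<close>
proof (induction y rule: dec_induct)
  case (step n)
  then show ?case using assms(1)[of n] \<open>l \<le> x\<close> by (auto intro: order.trans)
qed simp

lemma lift_Suc_antimono_le_on:
  fixes f :: "nat \<Rightarrow> 'a::order"
  assumes "\<And>i. l \<le> i \<Longrightarrow> i < r \<Longrightarrow> f (Suc i) \<le> f i" "l \<le> x" "x \<le> y" "y \<le> r"
  shows "f y \<le> f x"
  using \<open>x \<le> y\<close> \<open>y \<le> r\<close>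
proof (induction y rule: dec_induct)
  case (step n)
  then show ?case using assms(1)[of n] \<open>l \<le> x\<close> by (auto intro: order.trans)
qed simp

lemma lift_Suc_mono_less_on:
  fixes f :: "nat \<Rightarrow> 'a::order"
  assumes "\<And>i. i < r \<Longrightarrow> f i < f (Suc i)" "x < y" "y \<le> r"
  shows "f x < f y"
  using \<open>x < y\<close> \<open>y \<le> r\<close> unfolding less_eq_Suc_le
proof (induction y rule: dec_induct)
  case (step n)
  then show ?case using assms(1)[of n] by (auto intro: order.strict_trans)
qed (use assms(1) in simp)

lemma lift_Suc_antimono_less_on:
  fixes f :: "nat \<Rightarrow> 'a::order"
  assumes "\<And>i. i < r \<Longrightarrow> f (Suc i) < f i" "x < y" "y \<le> r"
  shows "f y < f x"
  using \<open>x < y\<close> \<open>y \<le> r\<close> unfolding less_eq_Suc_le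
proof (induction y rule: dec_induct)
  case (step n)
  then show ?case using assms(1)[of n] by (auto intro: order.strict_trans)
qed (use assms(1) in simp)

lemma ex_crossing_index:
  fixes f :: "nat \<Rightarrow> 'a::linorder"
  assumes "k \<le> i" "y < f k" "f i \<le> y"
  shows "\<exists>g. k \<le> g \<and> g < i \<and> y < f g \<and> f (Suc g) \<le> y"
  using assms
proof (induction i rule: dec_induct)
  case (step n)
  then show ?case by (cases "f n \<le> y") (auto intro: less_SucI simp: not_le)
qed simp

definition valley_on :: "nat \<Rightarrow> (nat \<Rightarrow> 'a::linorder) \<Rightarrow> bool" where
  "valley_on m f \<longleftrightarrow>
     (\<exists>j\<le>m. (\<forall>i<j. f (Suc i) \<le> f i) \<and> (\<forall>i. j \<le> i \<and> i < m \<longrightarrow> f i \<le> f (Suc i)))"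

lemma valley_on_le_max:
  assumes "valley_on m f" "k \<le> g" "g \<le> i" "i \<le> m"
  shows "f g \<le> max (f k) (f i)"
proof -
  obtain j where j: "j \<le> m" "\<forall>i<j. f (Suc i) \<le> f i" "\<forall>i. j \<le> i \<and> i < m \<longrightarrow> f i \<le> f (Suc i)"
    using assms(1) unfolding valley_on_def by blast
  show ?thesis
  proof (cases "g \<le> j")
    case True
    have "f g \<le> f k" by (rule lift_Suc_antimono_le_on[of 0 j]) (use j(2) assms(2) True in auto)
    then show ?thesis by (rule max.coboundedI1)
  next
    case False
    have "f g \<le> f i" by (rule lift_Suc_mono_le_on[of j m]) (use j(3) assms(3,4) False in auto)
    then show ?thesis by (rule max.coboundedI2)
  qed
qed

lemma valley_onI:
  fixes f :: "nat \<Rightarrow> 'a::linorder"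
  assumes no_drop: "\<And>k g. k < m \<Longrightarrow> f k < f (Suc k) \<Longrightarrow> Suc k \<le> g \<Longrightarrow> g \<le> m \<Longrightarrow> f (Suc k) \<le> f g"
  shows "valley_on m f"
proof (cases "\<exists>i<m. f i < f (Suc i)")
  case False
  then have "\<forall>i<m. f (Suc i) \<le> f i" using not_less by blast
  then show ?thesis unfolding valley_on_def by auto
next
  case True
  define j where "j = (LEAST i. i < m \<and> f i < f (Suc i))"
  have j: "j < m" "f j < f (Suc j)"
    using LeastI_ex[OF True] unfolding j_def by auto
  have before: "f (Suc i) \<le> f i" if "i < j" for i
    using not_less_Least[of i] that j(1) unfolding j_def by fastforce
  have last_ascent: "\<exists>k<i. f k < f (Suc k) \<and> f i \<le> f (Suc k)" if "Suc j \<le> i" for i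
    using that
  proof (induction i rule: dec_induct)
    case base
    then show ?case using j(2) by blast
  next
    case (step n)
    then obtain k where "k < n" "f k < f (Suc k)" "f n \<le> f (Suc k)" by blast
    then show ?case by (cases "f n < f (Suc n)") (auto intro: less_SucI)
  qed
  have after: "f i \<le> f (Suc i)" if ji: "j \<le> i" and im: "i < m" for i
  proof (cases "i = j")
    case False
    then obtain k where "k < i" "f k < f (Suc k)" "f i \<le> f (Suc k)"
      using last_ascent[of i] ji by auto
    then show ?thesis using no_drop[of k "Suc i"] im by (auto intro: order.trans)
  qed (use j in simp)
  have "\<forall>i<j. f (Suc i) \<le> f i" "\<forall>i. j \<le> i \<and> i < m \<longrightarrow> f i \<le> f (Suc i)"
    using before after by blast+
  then show ?thesis unfolding valley_on_def using j(1) less_imp_le by blast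
qed

lemma monomial_ideal_ex_gens_mdvd:
  assumes "monomial_ideal I" "w \<in> I"
  shows "\<exists>g\<in>gens I. mdvd g w"
  using assms(2)
proof (induction "deg w" arbitrary: w rule: less_induct)
  case less
  show ?case
  proof (cases "w \<in> gens I")
    case True
    then show ?thesis by (auto simp: mdvd_def)
  next
    case False
    then obtain v where v: "v \<in> I" "mdvd v w" "v \<noteq> w"
      using less.prems unfolding gens_def by auto
    then have "deg v < deg w" unfolding mdvd_def deg_def by (auto simp: prod_eq_iff)
    then obtain g where "g \<in> gens I" "mdvd g v" using less.hyps v(1) by blast
    then show ?thesis using v(2) unfolding mdvd_def by (meson le_trans)
  qed
qed

lemma mem_deg_comp_iff:
  assumes "monomial_ideal I" "deg w = j"
  shows "w \<in> deg_comp I j \<longleftrightarrow> w \<in> I"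
  using assms unfolding deg_comp_def monomial_ideal_def mdvd_def by blast

lemma gens_deg_comp:
  assumes "monomial_ideal I"
  shows "gens (deg_comp I j) = {u \<in> I. deg u = j}"
proof -
  have deg_ge: "j \<le> deg u" if "u \<in> deg_comp I j" for u
    using that unfolding deg_comp_def deg_def mdvd_def by auto
  have "\<exists>v\<in>deg_comp I j. deg v = j \<and> mdvd v u" if "u \<in> deg_comp I j" for u
    using that unfolding deg_comp_def by (fastforce simp: mdvd_def)
  moreover have "v = u" if "deg u = j" "u \<in> deg_comp I j" "v \<in> deg_comp I j" "mdvd v u" for u v
    using deg_ge[OF that(3)] that(1,4) unfolding mdvd_def deg_def by (auto simp: prod_eq_iff)
  ultimately show ?thesis
    using mem_deg_comp_iff[OF assms] unfolding gens_def by (metis (no_types, lifting))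
qed

definition degree_convex :: "monom set \<Rightarrow> bool" where
  "degree_convex I \<longleftrightarrow> (\<forall>p q p' q' y. (p, q) \<in> I \<longrightarrow> (p', q') \<in> I \<longrightarrow> p + q = p' + q' \<longrightarrow>
     p' \<le> y \<longrightarrow> y \<le> p \<longrightarrow> (y, p + q - y) \<in> I)"

lemma degree_convexD:
  assumes "degree_convex I" "(p, q) \<in> I" "(p', q') \<in> I" "p + q = p' + q'" "p' \<le> y" "y \<le> p"
  shows "(y, p + q - y) \<in> I"
  using assms unfolding degree_convex_def by blast

lemma exchange_if_componentwise_polymatroidal:
  assumes "monomial_ideal I" "componentwise_polymatroidal I"
    and "(p, q) \<in> I" "(p', q') \<in> I" "p + q = p' + q'" "p' < p"
  shows "(p - 1, q + 1) \<in> I"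
proof -
  let ?J = "deg_comp I (p + q)"
  have gens: "(p, q) \<in> gens ?J" "(p', q') \<in> gens ?J"
    using assms(3-5) by (auto simp: gens_deg_comp[OF assms(1)] deg_def)
  then have "polymatroidal ?J"
    using assms(2) unfolding componentwise_polymatroidal_def gens_def by blast
  moreover have "deg_var X (p', q') < deg_var X (p, q)"
    using assms(6) by (simp add: deg_var_def)
  ultimately obtain w where w: "deg_var w (p, q) < deg_var w (p', q')"
      "mult_var w (div_var X (p, q)) \<in> ?J"
    using gens unfolding polymatroidal_def by blast
  have "w = Y" using w(1) assms(6) by (cases w) (auto simp: deg_var_def)
  then have "(p - 1, q + 1) \<in> ?J" using w(2) by (simp add: mult_var_def div_var_def)
  then show ?thesis using assms(6) mem_deg_comp_iff[OF assms(1)] by (simp add: deg_def)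
qed

lemma degree_convex_if_componentwise_polymatroidal:
  assumes "monomial_ideal I" "componentwise_polymatroidal I"
  shows "degree_convex I"
  unfolding degree_convex_def
proof (intro allI impI)
  fix p q p' q' y
  assume "y \<le> p" "(p, q) \<in> I" "(p', q') \<in> I" "p + q = p' + q'" "p' \<le> y"
  then show "(y, p + q - y) \<in> I"
  proof (induction p arbitrary: q rule: dec_induct)
    case (step n)
    then have "(n, q + 1) \<in> I"
      using exchange_if_componentwise_polymatroidal[OF assms, of "Suc n" q p' q'] by simp
    then show ?case using step.IH[of "q + 1"] step.prems by simp
  qed (metis add_diff_cancel_left')
qed

lemma componentwise_polymatroidal_if_degree_convex:
  assumes "monomial_ideal I" "degree_convex I"
  shows "componentwise_polymatroidal I"
  unfolding componentwise_polymatroidal_def polymatroidal_def gens_deg_comp[OF assms(1)]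
proof (intro allI impI conjI ballI)
  fix j u v z
  assume u: "u \<in> {u \<in> I. deg u = j}" and v: "v \<in> {u \<in> I. deg u = j}"
    and less: "deg_var z v < deg_var z u"
  obtain p q p' q' where [simp]: "u = (p, q)" "v = (p', q')" by fastforce
  have mem: "(p, q) \<in> I" "(p', q') \<in> I" and degs: "p + q = j" "p' + q' = j"
    using u v by (auto simp: deg_def)
  show "\<exists>w. deg_var w u < deg_var w v \<and> mult_var w (div_var z u) \<in> deg_comp I j"
  proof (cases z)
    case X
    then have "p' < p" using less by (simp add: deg_var_def)
    then have "(p - 1, p + q - (p - 1)) \<in> I"
      by (intro degree_convexD[OF assms(2) mem]) (use degs in auto)
    then have "(p - 1, q + 1) \<in> I"
      using \<open>p' < p\<close> by (simp add: Suc_diff_le)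
    then have "(p - 1, q + 1) \<in> deg_comp I j"
      using \<open>p' < p\<close> degs by (subst mem_deg_comp_iff[OF assms(1)]) (auto simp: deg_def)
    then show ?thesis
      using X \<open>p' < p\<close> degs
      by (intro exI[of _ Y]) (auto simp: deg_var_def mult_var_def div_var_def)
  next
    case Y
    then have "p < p'" using less degs by (simp add: deg_var_def)
    then have "(p + 1, p' + q' - (p + 1)) \<in> I"
      by (intro degree_convexD[OF assms(2) mem(2,1)]) (use degs in auto)
    moreover have "p' + q' - (p + 1) = q - 1"
      using degs by arith
    ultimately have "(p + 1, q - 1) \<in> I"
      by simp
    then have "(p + 1, q - 1) \<in> deg_comp I j"
      using \<open>p < p'\<close> degs by (subst mem_deg_comp_iff[OF assms(1)]) (auto simp: deg_def)
    then show ?thesis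
      using Y \<open>p < p'\<close> degs
      by (intro exI[of _ X]) (auto simp: deg_var_def mult_var_def div_var_def)
  qed
qed (auto simp: deg_def)

lemma componentwise_polymatroidal_iff_degree_convex:
  "monomial_ideal I \<Longrightarrow> componentwise_polymatroidal I \<longleftrightarrow> degree_convex I"
  using degree_convex_if_componentwise_polymatroidal componentwise_polymatroidal_if_degree_convex
  by blast

locale staircase =
  fixes I :: "monom set" and m :: nat and a b :: "nat \<Rightarrow> nat"
  assumes monomial_ideal: "monomial_ideal I"
    and gens_eq: "gens I = {(a i, b i) | i. i \<le> m}"
    and a_decreasing: "\<forall>i<m. a (Suc i) < a i"
    and b_increasing: "\<forall>i<m. b i < b (Suc i)"
begin

abbreviation d :: "nat \<Rightarrow> nat" where
  "d i \<equiv> a i + b i"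

lemma a_less_iff: "i \<le> m \<Longrightarrow> k \<le> m \<Longrightarrow> a k < a i \<longleftrightarrow> i < k"
  using lift_Suc_antimono_less_on[of m a] a_decreasing by (metis less_asym' linorder_neqE_nat)

lemma b_less_iff: "i \<le> m \<Longrightarrow> k \<le> m \<Longrightarrow> b i < b k \<longleftrightarrow> i < k"
  using lift_Suc_mono_less_on[of m b] b_increasing by (metis less_asym' linorder_neqE_nat)

lemma mem_iff: "(p, q) \<in> I \<longleftrightarrow> (\<exists>i\<le>m. a i \<le> p \<and> b i \<le> q)"
proof
  assume "(p, q) \<in> I"
  then obtain g where "g \<in> gens I" "mdvd g (p, q)"
    using monomial_ideal_ex_gens_mdvd[OF monomial_ideal] by blast
  then show "\<exists>i\<le>m. a i \<le> p \<and> b i \<le> q"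
    using gens_eq by (auto simp: mdvd_def)
next
  assume "\<exists>i\<le>m. a i \<le> p \<and> b i \<le> q"
  moreover have "(a i, b i) \<in> I" if "i \<le> m" for i
    using that gens_eq unfolding gens_def by blast
  ultimately show "(p, q) \<in> I"
    using monomial_ideal unfolding monomial_ideal_def mdvd_def by fastforce
qed

lemma mem_if_gen_le: "i \<le> m \<Longrightarrow> a i \<le> p \<Longrightarrow> b i \<le> q \<Longrightarrow> (p, q) \<in> I"
  using mem_iff by blast

lemma b_Suc_le_if_mem:
  assumes "i < m" "(p, q) \<in> I" "p < a i"
  shows "b (Suc i) \<le> q"
proof -
  obtain g where g: "g \<le> m" "a g \<le> p" "b g \<le> q" using assms(2) mem_iff by blast
  then have "i < g" using a_less_iff[of i g] assms by simp
  then have "b (Suc i) \<le> b g" using b_less_iff[of "Suc i" g] g(1) by (cases "Suc i = g") auto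
  then show ?thesis using g(3) by simp
qed

lemma a_le_if_mem:
  assumes "i < m" "(p, q) \<in> I" "q < b (Suc i)"
  shows "a i \<le> p"
proof -
  obtain g where g: "g \<le> m" "a g \<le> p" "b g \<le> q" using assms(2) mem_iff by blast
  then have "g < Suc i" using b_less_iff[of g "Suc i"] assms by simp
  then have "a i \<le> a g" using a_less_iff[of g i] g(1) assms(1) by (cases "g = i") auto
  then show ?thesis using g(2) by simp
qed

lemma b_Suc_if_degree_descends:
  assumes "degree_convex I" "i < m" "d (Suc i) \<le> d i"
  shows "b (Suc i) = b i + 1"
proof -
  have a_Suc: "a (Suc i) < a i" and b_Suc: "b i < b (Suc i)"
    using assms(2) a_decreasing b_increasing by auto
  have upper: "(a i, b i) \<in> I"
    using assms(2) by (intro mem_if_gen_le[of i]) auto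
  have lower: "(a (Suc i), d i - a (Suc i)) \<in> I"
    using assms(2,3) by (intro mem_if_gen_le[of "Suc i"]) auto
  have "(a i - 1, d i - (a i - 1)) \<in> I"
    using a_Suc by (intro degree_convexD[OF assms(1) upper lower]) auto
  moreover have "d i - (a i - 1) = b i + 1" using a_Suc by simp
  ultimately have "b (Suc i) \<le> b i + 1"
    using b_Suc_le_if_mem[OF assms(2)] a_Suc by fastforce
  then show ?thesis using b_Suc by simp
qed

lemma a_Suc_if_degree_ascends:
  assumes "degree_convex I" "i < m" "d i \<le> d (Suc i)"
  shows "a (Suc i) = a i - 1"
proof -
  have a_Suc: "a (Suc i) < a i" and b_Suc: "b i < b (Suc i)"
    using assms(2) a_decreasing b_increasing by auto
  have upper: "(a i, d (Suc i) - a i) \<in> I"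
    using assms(2,3) by (intro mem_if_gen_le[of i]) auto
  have lower: "(a (Suc i), b (Suc i)) \<in> I"
    using assms(2) by (intro mem_if_gen_le[of "Suc i"]) auto
  have "(a (Suc i) + 1, a i + (d (Suc i) - a i) - (a (Suc i) + 1)) \<in> I"
    using a_Suc assms(3) by (intro degree_convexD[OF assms(1) upper lower]) auto
  moreover have "a i + (d (Suc i) - a i) - (a (Suc i) + 1) < b (Suc i)"
    using assms(3) b_Suc by simp
  ultimately have "a i \<le> a (Suc i) + 1"
    using a_le_if_mem[OF assms(2)] by blast
  then show ?thesis using a_Suc by simp
qed

lemma degree_ge_after_ascent:
  assumes "degree_convex I" "k < m" "d k < d (Suc k)" "Suc k \<le> g" "g \<le> m"
  shows "d (Suc k) \<le> d g"
proof (rule ccontr)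
  assume "\<not> d (Suc k) \<le> d g"
  then have low: "d g < d (Suc k)" by simp
  define j where "j = d (Suc k) - 1"
  have a_Suc: "a (Suc k) = a k - 1"
    using a_Suc_if_degree_ascends assms(1-3) by simp
  have "a g < a k" using a_less_iff[of k g] assms(2,4,5) by simp
  have upper: "(a k, j - a k) \<in> I"
    using assms(3) unfolding j_def by (intro mem_if_gen_le[of k]) (use assms(2) in auto)
  have lower: "(a g, j - a g) \<in> I"
    using low unfolding j_def by (intro mem_if_gen_le[of g]) (use assms(5) in auto)
  have "(a k - 1, a k + (j - a k) - (a k - 1)) \<in> I"
    using \<open>a g < a k\<close> assms(3) low
    by (intro degree_convexD[OF assms(1) upper lower]) (auto simp: j_def)
  then have "(a (Suc k), b (Suc k) - 1) \<in> I"
    using a_Suc assms(3) \<open>a g < a k\<close> unfolding j_def by (simp add: algebra_simps)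
  moreover have "b (Suc k) - 1 < b (Suc k)"
    using b_increasing assms(2) by fastforce
  ultimately have "a k \<le> a (Suc k)" using a_le_if_mem[OF assms(2)] by blast
  then show False using a_decreasing assms(2) by auto
qed

definition unit_steps :: bool where
  "unit_steps \<longleftrightarrow> (\<forall>i<m. d i \<le> d (Suc i) \<longrightarrow> a (Suc i) = a i - 1) \<and>
                  (\<forall>i<m. d (Suc i) \<le> d i \<longrightarrow> b (Suc i) = b i + 1)"

lemma unit_steps_if_degree_convex: "degree_convex I \<Longrightarrow> unit_steps"
  unfolding unit_steps_def using a_Suc_if_degree_ascends b_Suc_if_degree_descends by blast

lemma valley_if_degree_convex: "degree_convex I \<Longrightarrow> valley_on m d"
  by (rule valley_onI) (rule degree_ge_after_ascent)

lemma ex_gen_below_if_unit_steps_valley: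
  assumes "unit_steps" "valley_on m d"
    and "k \<le> m" "i \<le> m" "d k \<le> j" "d i \<le> j" "a i \<le> y" "b k + y \<le> j"
  shows "\<exists>g\<le>m. a g \<le> y \<and> b g + y \<le> j"
proof (cases "a k \<le> y")
  case True
  then show ?thesis using assms(3,8) by blast
next
  case False
  then have "k < i" using a_less_iff[of k i] assms(3,4,7) by simp
  then obtain g where g: "k \<le> g" "g < i" "y < a g" "a (Suc g) \<le> y"
    using ex_crossing_index[of k i y a] False assms(7) by auto
  have gm: "g < m" using g(2) assms(4) by simp
  have deg_g: "d g \<le> j" and deg_Suc_g: "d (Suc g) \<le> j"
    using valley_on_le_max[OF assms(2), of k g i] valley_on_le_max[OF assms(2), of k "Suc g" i]
      g(1,2) assms(4-6) by auto
  show ?thesis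
  proof (cases "d g \<le> d (Suc g)")
    case True
    then have "a (Suc g) = a g - 1" using assms(1) gm unfolding unit_steps_def by blast
    then show ?thesis using g(3,4) deg_Suc_g gm by (intro exI[of _ "Suc g"]) auto
  next
    case False
    then have "b (Suc g) = b g + 1" using assms(1) gm unfolding unit_steps_def by simp
    then show ?thesis using g(3,4) deg_g gm by (intro exI[of _ "Suc g"]) auto
  qed
qed

lemma degree_convex_if_unit_steps_valley:
  assumes "unit_steps" "valley_on m d"
  shows "degree_convex I"
  unfolding degree_convex_def
proof (intro allI impI)
  fix p q p' q' y
  assume mem: "(p, q) \<in> I" "(p', q') \<in> I" and deg: "p + q = p' + q'"
    and y: "p' \<le> y" "y \<le> p"
  obtain k where k: "k \<le> m" "a k \<le> p" "b k \<le> q" using mem(1) mem_iff by blast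
  obtain i where i: "i \<le> m" "a i \<le> p'" "b i \<le> q'" using mem(2) mem_iff by blast
  obtain g where "g \<le> m" "a g \<le> y" "b g + y \<le> p + q"
    using ex_gen_below_if_unit_steps_valley[OF assms k(1) i(1), of "p + q" y] k i deg y by auto
  then show "(y, p + q - y) \<in> I" by (intro mem_if_gen_le) auto
qed

lemma degree_convex_iff: "degree_convex I \<longleftrightarrow> unit_steps \<and> valley_on m d"
  using unit_steps_if_degree_convex valley_if_degree_convex degree_convex_if_unit_steps_valley
  by blast

lemma unit_steps_iff:
  "unit_steps \<longleftrightarrow>
    (\<forall>i<m. d i > d (Suc i) \<longrightarrow> a i - 1 > a (Suc i) \<and> b (Suc i) = b i + 1) \<and>
    (\<forall>i<m. d i < d (Suc i) \<longrightarrow> b i + 1 < b (Suc i) \<and> a (Suc i) = a i - 1) \<and>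
    (\<forall>i<m. d i = d (Suc i) \<longrightarrow> b (Suc i) = b i + 1 \<and> a (Suc i) = a i - 1)"
  unfolding unit_steps_def using a_decreasing b_increasing
  by (auto simp: le_less)

end

theorem theorem2p6:
  fixes I :: "monom set" and m :: nat and a b :: "nat \<Rightarrow> nat"
  assumes "monomial_ideal I"
    and "gens I = {(a i, b i) | i. i \<le> m}"
    and "\<forall>i<m. a i > a (Suc i)"
    and "\<forall>i<m. b i < b (Suc i)"
  shows "componentwise_polymatroidal I \<longleftrightarrow>
    (\<forall>i<m. a i + b i > a (Suc i) + b (Suc i) \<longrightarrow>
        a i - 1 > a (Suc i) \<and> b (Suc i) = b i + 1) \<and>
    (\<forall>i<m. a i + b i < a (Suc i) + b (Suc i) \<longrightarrow>
        b i + 1 < b (Suc i) \<and> a (Suc i) = a i - 1) \<and>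
    (\<forall>i<m. a i + b i = a (Suc i) + b (Suc i) \<longrightarrow>
        b (Suc i) = b i + 1 \<and> a (Suc i) = a i - 1) \<and>
    (\<exists>j\<le>m. (\<forall>i<j. a i + b i \<ge> a (Suc i) + b (Suc i)) \<and>
            (\<forall>i. j \<le> i \<and> i < m \<longrightarrow> a i + b i \<le> a (Suc i) + b (Suc i)))"
proof -
  interpret staircase I m a b
    using assms by unfold_locales
  have "componentwise_polymatroidal I \<longleftrightarrow> unit_steps \<and> valley_on m (\<lambda>i. a i + b i)"
    using componentwise_polymatroidal_iff_degree_convex[OF assms(1)] degree_convex_iff by simp
  then show ?thesis
    unfolding unit_steps_iff valley_on_def by simp
qed

end
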